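(* Work on the jet space with coordinates $t\in\mathbb R$, $\mathbf x,\mathbf v,\mathbf v',\mathbf v''\in\mathbb R^3$, together with parameters $s_0\in\mathbb R$, $\mathbf s\in\mathbb R^3$, and a constant $m$. Let $\cdot$ and $\times$ be the Euclidean dot and cross products on $\mathbb R^3$. Put $$D=(1+\mathbf v\cdot\mathbf v)(s_0^2+\mathbf s\cdot\mathbf s)-(s_0+\mathbf s\cdot\mathbf v)^2 ,$$ and define $$\mathbf E=\frac{\mathbf v''\times(\mathbf s-s_0\mathbf v)}{D^{3/2}}-3\,\frac{(s_0^2+\mathbf s\cdot\mathbf s)\,\mathbf v'\cdot\mathbf v-(s_0+\mathbf s\cdot\mathbf v)\,\mathbf s\cdot\mathbf v'}{D^{5/2}}\,\mathbf v'\times(\mathbf s-s_0\mathbf v)+m\,\frac{(1+\mathbf v\cdot\mathbf v)\mathbf v'-(\mathbf v'\cdot\mathbf v)\mathbf v}{(1+\mathbf v\cdot\mathbf v)^{3/2}(s_0^2+\mathbf s\cdot\mathbf s)^{3/2}}.$$ For arbitrary $\mathbf n,\mathbf q\in\mathbb R^3$, let $\xi_3$ be the vector field $$\begin{aligned}\xi_3={}&-(\mathbf q\cdot\mathbf s)\partial_{s_0}+\big(s_0\mathbf q+\mathbf n\times\mathbf s\big)\cdot\partial_{\mathbf s}-(\mathbf q\cdot\mathbf x)\partial_t+\big(t\mathbf q+\mathbf n\times\mathbf x\big)\cdot\partial_{\mathbf x}\\&+\big(\mathbf q+(\mathbf q\cdot\mathbf v)\mathbf v+\mathbf n\times\mathbf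 v\big)\cdot\partial_{\mathbf v}+\big(2(\mathbf q\cdot\mathbf v)\mathbf v'+(\mathbf q\cdot\mathbf v')\mathbf v+\mathbf n\times\mathbf v'\big)\cdot\partial_{\mathbf v'}\\&+\big(3(\mathbf q\cdot\mathbf v)\mathbf v''+3(\mathbf q\cdot\mathbf v')\mathbf v'+(\mathbf q\cdot\mathbf v'')\mathbf v+\mathbf n\times\mathbf v''\big)\cdot\partial_{\mathbf v''}.\end{aligned}$$ This is the prolongation to $J_3(\mathbb R;\mathbb R^3)$ of the infinitesimal rotation of $\mathbb R^4=\{(t,\mathbf x)\}$ with parameters $\mathbf n,\mathbf q$, extended to act on $(s_0,\mathbf s)$ as a four-vector. Here $\mathbf a\cdot\partial_{\mathbf x}=\sum_a a^a\partial_{x^a}$. Then, applying $\xi_3$ componentwise to $\mathbf E$, $$\xi_3(\mathbf E)=\mathbf n\times\mathbf E+(\mathbf q\cdot\mathbf v)\,\mathbf E-(\mathbf v\cdot\mathbf E)\,\mathbf q .$$ In particular, the third-order system $\mathbf E=0$ is invariant under these (orthogonal) transformations.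
   Context: $\mathbf E$ is the parametrization, with respect to $t=x^0$, of the four-dimensional Euler–Poisson expression $\boldsymbol{\mathcal E}$ of the companion Assertion 1. It is defined on the open set where $D>0$ and $s_0^2+\mathbf s\cdot\mathbf s>0$. *)

theory Defs
  imports "HOL-Analysis.Analysis"
begin

text \<open>A point of the extended jet space: (t, x, v, v', v'', s0, s),
  with t, s0 real and x, v, v', v'', s in R^3.\<close>
type_synonym jpt = "real \<times> (real^3) \<times> (real^3) \<times> (real^3) \<times> (real^3) \<times> real \<times> (real^3)"

definition Dfun :: "real^3 \<Rightarrow> real \<Rightarrow> real^3 \<Rightarrow> real" where
  "Dfun v s0 s = (1 + v \<bullet> v) * (s0^2 + s \<bullet> s) - (s0 + s \<bullet> v)^2"

definition Efun :: "real \<Rightarrow> jpt \<Rightarrow> real^3" where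
  "Efun m p = (case p of (t, x, v, v1, v2, s0, s) \<Rightarrow>
     (1 / (Dfun v s0 s) powr (3/2)) *\<^sub>R cross3 v2 (s - s0 *\<^sub>R v)
     - (3 * ((s0^2 + s \<bullet> s) * (v1 \<bullet> v) - (s0 + s \<bullet> v) * (s \<bullet> v1))
          / (Dfun v s0 s) powr (5/2)) *\<^sub>R cross3 v1 (s - s0 *\<^sub>R v)
     + (m / ((1 + v \<bullet> v) powr (3/2) * (s0^2 + s \<bullet> s) powr (3/2)))
          *\<^sub>R ((1 + v \<bullet> v) *\<^sub>R v1 - (v1 \<bullet> v) *\<^sub>R v))"

definition xi3 :: "real^3 \<Rightarrow> real^3 \<Rightarrow> jpt \<Rightarrow> jpt" where
  "xi3 n q p = (case p of (t, x, v, v1, v2, s0, s) \<Rightarrow>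
     ( - (q \<bullet> x),
       t *\<^sub>R q + cross3 n x,
       q + (q \<bullet> v) *\<^sub>R v + cross3 n v,
       2 * (q \<bullet> v) *\<^sub>R v1 + (q \<bullet> v1) *\<^sub>R v + cross3 n v1,
       3 * (q \<bullet> v) *\<^sub>R v2 + 3 * (q \<bullet> v1) *\<^sub>R v1 + (q \<bullet> v2) *\<^sub>R v + cross3 n v2,
       - (q \<bullet> s),
       s0 *\<^sub>R q + cross3 n s))"

end

theory Submission
  imports Defs
begin

(* Rather than differentiating E along the flow of xi_3 in one go, we split
   E = A X - B Y + C w into scalar coefficients
     A = D^(-3/2),  B = 3 N D^(-5/2),  C = m (1 + v.v)^(-3/2) (s0^2 + s.s)^(-3/2)
   and vectors
     X = v'' x (s - s0 v),  Y = v' x (s - s0 v),  w = (1 + v.v) v' - (v'.v) v.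
   Along any curve tangent to xi_3 each vector transforms by the target action
     rot_action n q v F = n x F + (q.v) F - (v.F) q
   plus an extra rescaling k (q.v) F, while its coefficient is rescaled with the opposite
   rate -k (q.v); such weighted products transform exactly by rot_action.  The only
   inhomogeneous terms, 3 (q.v') A Y in the derivatives of X and of B, cancel in A X - B Y. *)

text \<open>Product rules for the cross and dot product of differentiable curves in R^3,
  stated with an explicit right-hand side so they can be chained by rule application.\<close>

lemma has_vector_derivative_cross3:
  fixes f g :: "real \<Rightarrow> real^3"
  assumes "(f has_vector_derivative f') (at x)" "(g has_vector_derivative g') (at x)"
    and "d = cross3 (f x) g' + cross3 f' (g x)"
  shows "((\<lambda>h. cross3 (f h) (g h)) has_vector_derivative d) (at x)"
proof -
  have "bounded_bilinear (cross3 :: real^3 \<Rightarrow> real^3 \<Rightarrow> real^3)"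
    using bilinear_cross bilinear_conv_bounded_bilinear by blast
  from bounded_bilinear.has_vector_derivative[OF this assms(1,2)] show ?thesis
    using assms(3) by simp
qed

lemma has_real_derivative_inner3:
  fixes f g :: "real \<Rightarrow> real^3"
  assumes "(f has_vector_derivative f') (at x)" "(g has_vector_derivative g') (at x)"
    and "d = f x \<bullet> g' + f' \<bullet> g x"
  shows "((\<lambda>h. f h \<bullet> g h) has_real_derivative d) (at x)"
  using bounded_bilinear.has_vector_derivative[OF bounded_bilinear_inner assms(1,2)] assms(3)
  by (simp add: has_real_derivative_iff_has_vector_derivative)

lemma has_real_derivative_powr_rescaling:
  fixes f :: "real \<Rightarrow> real"
  assumes "(f has_real_derivative c * f x) (at x)" and "f x > 0"
  shows "((\<lambda>h. f h powr r) has_real_derivative (r * c) * f x powr r) (at x)"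
proof -
  have "((\<lambda>h. f h powr r) has_real_derivative r * f x powr (r - 1) * (c * f x)) (at x)"
    using DERIV_fun_powr[OF assms] by simp
  moreover have "f x powr (r - 1) * f x = f x powr r"
    using assms(2) by (simp add: powr_diff)
  ultimately show ?thesis
    by (simp add: algebra_simps)
qed

definition rot_action :: "real^3 \<Rightarrow> real^3 \<Rightarrow> real^3 \<Rightarrow> real^3 \<Rightarrow> real^3" where
  "rot_action n q v E = cross3 n E + (q \<bullet> v) *\<^sub>R E - (v \<bullet> E) *\<^sub>R q"

lemma rot_action_scaleR: "rot_action n q v (c *\<^sub>R E) = c *\<^sub>R rot_action n q v E"
  by (simp add: rot_action_def cross_mult_right algebra_simps)

lemma rot_action_add: "rot_action n q v (E + F) = rot_action n q v E + rot_action n q v F"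
  by (simp add: rot_action_def cross_add_right inner_add_right algebra_simps)

lemma rot_action_diff: "rot_action n q v (E - F) = rot_action n q v E - rot_action n q v F"
  by (simp add: rot_action_def Cross3.right_diff_distrib inner_diff_right algebra_simps)

lemma has_vector_derivative_weighted_product:
  fixes f :: "real \<Rightarrow> real" and F :: "real \<Rightarrow> real^3"
  assumes "(f has_real_derivative - (k * (q \<bullet> v)) * f x + a) (at x)"
    and "(F has_vector_derivative rot_action n q v (F x) + (k * (q \<bullet> v)) *\<^sub>R F x + b) (at x)"
  shows "((\<lambda>h. f h *\<^sub>R F h) has_vector_derivative
           rot_action n q v (f x *\<^sub>R F x) + a *\<^sub>R F x + f x *\<^sub>R b) (at x)"
  using has_vector_derivative_scaleR[OF assms]
  by (simp add: rot_action_scaleR algebra_simps)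


text \<open>A curve h \<mapsto> (V h, V1 h, V2 h, S0 h, Sv h) in the (v, v', v'', s0, s)-part of the
  extended jet space whose velocity at h = 0 is the vector field xi_3. Only first-order
  information at 0 enters, so every result below is a statement about xi_3 itself.\<close>

locale xi3_curve =
  fixes n q :: "real^3"
    and V V1 V2 Sv :: "real \<Rightarrow> real^3" and S0 :: "real \<Rightarrow> real"
  assumes V_deriv: "(V has_vector_derivative q + (q \<bullet> V 0) *\<^sub>R V 0 + cross3 n (V 0)) (at 0)"
    and V1_deriv: "(V1 has_vector_derivative
          2 * (q \<bullet> V 0) *\<^sub>R V1 0 + (q \<bullet> V1 0) *\<^sub>R V 0 + cross3 n (V1 0)) (at 0)"
    and V2_deriv: "(V2 has_vector_derivative
          3 * (q \<bullet> V 0) *\<^sub>R V2 0 + 3 * (q \<bullet> V1 0) *\<^sub>R V1 0 + (q \<bullet> V2 0) *\<^sub>R V 0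
          + cross3 n (V2 0)) (at 0)"
    and S0_deriv: "(S0 has_real_derivative - (q \<bullet> Sv 0)) (at 0)"
    and Sv_deriv: "(Sv has_vector_derivative S0 0 *\<^sub>R q + cross3 n (Sv 0)) (at 0)"
begin

definition W :: "real \<Rightarrow> real" where "W h = 1 + V h \<bullet> V h"
definition S :: "real \<Rightarrow> real" where "S h = (S0 h)\<^sup>2 + Sv h \<bullet> Sv h"
definition D :: "real \<Rightarrow> real" where "D h = Dfun (V h) (S0 h) (Sv h)"
definition N :: "real \<Rightarrow> real" where
  "N h = S h * (V1 h \<bullet> V h) - (S0 h + Sv h \<bullet> V h) * (Sv h \<bullet> V1 h)"
definition U :: "real \<Rightarrow> real^3" where "U h = Sv h - S0 h *\<^sub>R V h"
definition X :: "real \<Rightarrow> real^3" where "X h = cross3 (V2 h) (U h)"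
definition Y :: "real \<Rightarrow> real^3" where "Y h = cross3 (V1 h) (U h)"
definition w :: "real \<Rightarrow> real^3" where "w h = W h *\<^sub>R V1 h - (V1 h \<bullet> V h) *\<^sub>R V h"

lemmas curve_derivs = V_deriv V1_deriv V2_deriv S0_deriv Sv_deriv

lemma W_deriv: "(W has_real_derivative 2 * (q \<bullet> V 0) * W 0) (at 0)"
  unfolding W_def[abs_def]
  by (rule derivative_eq_intros has_real_derivative_inner3 curve_derivs refl)+
     (simp add: cross3_simps forall_3)

text \<open>The four-vector (s0, s) is only rotated, so its Euclidean length is conserved.\<close>

lemma S_deriv: "(S has_real_derivative 0) (at 0)"
  unfolding S_def[abs_def]
  by (rule derivative_eq_intros has_real_derivative_inner3 curve_derivs refl)+
     (simp add: cross3_simps forall_3)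

lemma D_deriv: "(D has_real_derivative 2 * (q \<bullet> V 0) * D 0) (at 0)"
  unfolding D_def[abs_def] Dfun_def
  by (rule derivative_eq_intros has_real_derivative_inner3 curve_derivs refl)+
     (simp add: Dfun_def cross3_simps power2_eq_square)

lemma N_deriv: "(N has_real_derivative 3 * (q \<bullet> V 0) * N 0 + (q \<bullet> V1 0) * D 0) (at 0)"
  unfolding N_def[abs_def] S_def D_def Dfun_def
  by (rule derivative_eq_intros has_real_derivative_inner3 curve_derivs refl)+
     (simp add: cross3_simps power2_eq_square)

lemma U_deriv: "(U has_vector_derivative cross3 n (U 0) + (q \<bullet> U 0) *\<^sub>R V 0) (at 0)"
  unfolding U_def[abs_def]
  by (rule derivative_eq_intros curve_derivs refl)+
     (simp add: cross3_simps forall_3)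

lemma X_deriv: "(X has_vector_derivative
    rot_action n q (V 0) (X 0) + (3 * (q \<bullet> V 0)) *\<^sub>R X 0 + (3 * (q \<bullet> V1 0)) *\<^sub>R Y 0) (at 0)"
  unfolding X_def[abs_def]
  by (rule has_vector_derivative_cross3[OF V2_deriv U_deriv])
     (simp add: Y_def rot_action_def cross3_simps forall_3)

lemma Y_deriv: "(Y has_vector_derivative
    rot_action n q (V 0) (Y 0) + (2 * (q \<bullet> V 0)) *\<^sub>R Y 0) (at 0)"
  unfolding Y_def[abs_def]
  by (rule has_vector_derivative_cross3[OF V1_deriv U_deriv])
     (simp add: rot_action_def cross3_simps forall_3)

lemma w_deriv: "(w has_vector_derivative
    rot_action n q (V 0) (w 0) + (3 * (q \<bullet> V 0)) *\<^sub>R w 0) (at 0)"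
  unfolding w_def[abs_def] W_def
  by (rule derivative_eq_intros has_real_derivative_inner3 curve_derivs refl)+
     (simp add: rot_action_def cross3_simps forall_3)


definition A :: "real \<Rightarrow> real" where "A h = D h powr (-3/2)"
definition B :: "real \<Rightarrow> real" where "B h = 3 * N h * D h powr (-5/2)"
definition C :: "real \<Rightarrow> real \<Rightarrow> real" where "C m h = m * W h powr (-3/2) * S h powr (-3/2)"

lemma A_deriv:
  assumes "D 0 > 0"
  shows "(A has_real_derivative - (3 * (q \<bullet> V 0)) * A 0) (at 0)"
  using has_real_derivative_powr_rescaling[OF D_deriv assms, of "-3/2"]
  unfolding A_def[abs_def] by simp

lemma B_deriv:
  assumes "D 0 > 0"
  shows "(B has_real_derivative - (2 * (q \<bullet> V 0)) * B 0 + 3 * (q \<bullet> V1 0) * A 0) (at 0)"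
proof -
  have shift: "D 0 powr (-5/2) * D 0 = D 0 powr (-3/2)"
    using powr_add[of "D 0" "-5/2" 1] assms by simp
  note D_pow = has_real_derivative_powr_rescaling[OF D_deriv assms, of "-5/2"]
  have "((\<lambda>h. 3 * N h * D h powr (-5/2)) has_real_derivative
      3 * N 0 * (-5/2 * (2 * (q \<bullet> V 0)) * D 0 powr (-5/2))
      + 3 * (3 * (q \<bullet> V 0) * N 0 + (q \<bullet> V1 0) * D 0) * D 0 powr (-5/2)) (at 0)"
    using DERIV_mult[OF DERIV_cmult[OF N_deriv, of 3] D_pow] by (simp add: mult_ac)
  moreover have "3 * N 0 * (-5/2 * (2 * (q \<bullet> V 0)) * D 0 powr (-5/2))
      + 3 * (3 * (q \<bullet> V 0) * N 0 + (q \<bullet> V1 0) * D 0) * D 0 powr (-5/2)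
      = - (2 * (q \<bullet> V 0)) * (3 * N 0 * D 0 powr (-5/2)) + 3 * (q \<bullet> V1 0) * D 0 powr (-3/2)"
    using shift by (simp add: algebra_simps)
  ultimately show ?thesis
    unfolding B_def[abs_def] A_def by simp
qed

lemma C_deriv:
  assumes "S 0 > 0"
  shows "(C m has_real_derivative - (3 * (q \<bullet> V 0)) * C m 0) (at 0)"
proof -
  have W_pos: "W 0 > 0"
    unfolding W_def by (simp add: add_pos_nonneg)
  have "(S has_real_derivative 0 * S 0) (at 0)"
    using S_deriv by simp
  note S_pow = has_real_derivative_powr_rescaling[OF this assms, of "-3/2"]
  note W_pow = has_real_derivative_powr_rescaling[OF W_deriv W_pos, of "-3/2"]
  have "((\<lambda>h. m * W h powr (-3/2) * S h powr (-3/2)) has_real_derivative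
      m * (W 0 powr (-3/2) * (0 * S 0 powr (-3/2)))
      + m * (-3/2 * (2 * (q \<bullet> V 0)) * W 0 powr (-3/2)) * S 0 powr (-3/2)) (at 0)"
    using DERIV_mult[OF DERIV_cmult[OF W_pow, of m] S_pow] by (simp add: algebra_simps)
  then show ?thesis
    unfolding C_def[abs_def] by (simp add: algebra_simps)
qed


lemma Efun_split:
  "Efun m (t, x, V h, V1 h, V2 h, S0 h, Sv h) = A h *\<^sub>R X h - B h *\<^sub>R Y h + C m h *\<^sub>R w h"
proof -
  have inv: "z powr (-3/2) = 1 / z powr (3/2)" "z powr (-5/2) = 1 / z powr (5/2)" for z :: real
    using powr_minus_divide[of z "3/2"] powr_minus_divide[of z "5/2"] by auto
  show ?thesis
    unfolding Efun_def A_def B_def C_def X_def Y_def w_def U_def D_def N_def S_def W_def inv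
    by (simp add: field_simps)
qed

text \<open>The covariance of E along any curve tangent to xi_3: the inhomogeneous terms
  3 (q . v') A Y of the first and the second product cancel.\<close>

lemma Efun_deriv:
  fixes t :: "real \<Rightarrow> real" and x :: "real \<Rightarrow> real^3"
  assumes "D 0 > 0" and "S 0 > 0"
  shows "((\<lambda>h. Efun m (t h, x h, V h, V1 h, V2 h, S0 h, Sv h)) has_vector_derivative
           rot_action n q (V 0) (Efun m (t 0, x 0, V 0, V1 0, V2 0, S0 0, Sv 0))) (at 0)"
proof -
  let ?qv1 = "q \<bullet> V1 0"
  have AX: "((\<lambda>h. A h *\<^sub>R X h) has_vector_derivative
      rot_action n q (V 0) (A 0 *\<^sub>R X 0) + 0 *\<^sub>R X 0 + A 0 *\<^sub>R ((3 * ?qv1) *\<^sub>R Y 0)) (at 0)"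
    using A_deriv[OF assms(1)] X_deriv
    by (intro has_vector_derivative_weighted_product[where k = 3]) simp_all
  have BY: "((\<lambda>h. B h *\<^sub>R Y h) has_vector_derivative
      rot_action n q (V 0) (B 0 *\<^sub>R Y 0) + (3 * ?qv1 * A 0) *\<^sub>R Y 0 + B 0 *\<^sub>R 0) (at 0)"
    using B_deriv[OF assms(1)] Y_deriv
    by (intro has_vector_derivative_weighted_product[where k = 2]) simp_all
  have Cw: "((\<lambda>h. C m h *\<^sub>R w h) has_vector_derivative
      rot_action n q (V 0) (C m 0 *\<^sub>R w 0) + 0 *\<^sub>R w 0 + C m 0 *\<^sub>R 0) (at 0)"
    using C_deriv[OF assms(2)] w_deriv
    by (intro has_vector_derivative_weighted_product[where k = 3]) simp_all
  show ?thesis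
    unfolding Efun_split
    by (rule has_vector_derivative_eq_rhs[OF
          has_vector_derivative_add[OF has_vector_derivative_diff[OF AX BY] Cw]])
       (simp add: rot_action_add rot_action_diff)
qed

end


text \<open>The straight line through p in the direction xi_3(p) is tangent to xi_3, so the
  derivative of E along it is given by the covariance lemma above.\<close>

theorem mainTheorem3:
  fixes m t s0 :: real and x v v1 v2 s n q :: "real^3"
  assumes "Dfun v s0 s > 0" and "s0^2 + s \<bullet> s > 0"
  defines "p \<equiv> (t, x, v, v1, v2, s0, s)"
  shows "((\<lambda>h::real. Efun m (p + h *\<^sub>R xi3 n q p)) has_vector_derivative
           (cross3 n (Efun m p) + (q \<bullet> v) *\<^sub>R Efun m p - (v \<bullet> Efun m p) *\<^sub>R q)) (at 0)"
proof -
  define V where "V = (\<lambda>h::real. v + h *\<^sub>R (q + (q \<bullet> v) *\<^sub>R v + cross3 n v))"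
  define V1 where "V1 = (\<lambda>h::real.
    v1 + h *\<^sub>R (2 * (q \<bullet> v) *\<^sub>R v1 + (q \<bullet> v1) *\<^sub>R v + cross3 n v1))"
  define V2 where "V2 = (\<lambda>h::real. v2 + h *\<^sub>R (3 * (q \<bullet> v) *\<^sub>R v2 + 3 * (q \<bullet> v1) *\<^sub>R v1
    + (q \<bullet> v2) *\<^sub>R v + cross3 n v2))"
  define S0 where "S0 = (\<lambda>h::real. s0 + h * - (q \<bullet> s))"
  define Sv where "Sv = (\<lambda>h::real. s + h *\<^sub>R (s0 *\<^sub>R q + cross3 n s))"
  interpret xi3_curve n q V V1 V2 Sv S0
    by unfold_locales (auto simp: V_def V1_def V2_def S0_def Sv_def intro!: derivative_eq_intros)
  have line: "p + h *\<^sub>R xi3 n q p = (t + h * - (q \<bullet> x), x + h *\<^sub>R (t *\<^sub>R q + cross3 n x),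
      V h, V1 h, V2 h, S0 h, Sv h)" for h
    by (simp add: p_def xi3_def V_def V1_def V2_def S0_def Sv_def)
  have "D 0 > 0" and "S 0 > 0"
    using assms(1,2) unfolding D_def S_def by (simp_all add: V_def S0_def Sv_def)
  from Efun_deriv[OF this, of m "\<lambda>h. t + h * - (q \<bullet> x)" "\<lambda>h. x + h *\<^sub>R (t *\<^sub>R q + cross3 n x)"]
  show ?thesis
    unfolding line by (simp add: p_def rot_action_def V_def V1_def V2_def S0_def Sv_def)
qed

end
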